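(* Let $\sigma_0,\sigma_\epsilon>0$, $\theta_0\in\mathbb{R}$, prior $\Theta\sim N(\theta_0,\sigma_0^2)$, signal $X=\Theta+\epsilon$ with $\epsilon\sim\mathrm{Cauchy}(0,\sigma_\epsilon)$ independent of $\Theta$, and let $\theta_1(x)=\mathbb{E}[\Theta\mid X=x]$. With $a=\sigma_\epsilon/\sigma_0$, the DeGroot coefficient $\omega=\frac{d\theta_1}{dx}\big|_{x=\theta_0}$ is $$\omega=1+a^2-\sqrt{\frac{2}{\pi}}\,\frac{a}{\operatorname{erfcx}(a/\sqrt2)},$$ where $\operatorname{erfcx}(y)=e^{y^2}\bigl(1-\frac{2}{\sqrt\pi}\int_0^y e^{-t^2}dt\bigr)$.
   Context: $\mathrm{Cauchy}(\mu,s)$ has density $t\mapsto\frac{1}{\pi s[1+((t-\mu)/s)^2]}$. The posterior mean is $\theta_1(x)=\frac{\int\theta f_\Theta(\theta)l_\epsilon(x-\theta)d\theta}{\int f_\Theta(\theta)l_\epsilon(x-\theta)d\theta}$. The DeGroot coefficient is the slope of the posterior mean in the signal at $x=\theta_0$ (local linearization $\theta_1\approx\theta_0+\omega(x-\theta_0)$). *)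

theory Defs
  imports "HOL-Probability.Probability"
begin

definition cauchy_density :: "real \<Rightarrow> real \<Rightarrow> real \<Rightarrow> real" where
  "cauchy_density \<mu> s t = 1 / (pi * s * (1 + ((t - \<mu>) / s)^2))"

text \<open>Posterior mean of Theta given X = x, for prior density f and noise density l
  (signal X = Theta + eps).\<close>
definition posterior_mean :: "(real \<Rightarrow> real) \<Rightarrow> (real \<Rightarrow> real) \<Rightarrow> real \<Rightarrow> real" where
  "posterior_mean f l x =
     (\<integral>\<theta>. \<theta> * f \<theta> * l (x - \<theta>) \<partial>lborel) / (\<integral>\<theta>. f \<theta> * l (x - \<theta>) \<partial>lborel)"

definition erfcx :: "real \<Rightarrow> real" where
  "erfcx y = exp (y^2) * (1 - 2 / sqrt pi * (LBINT t=0..y. exp (- (t^2))))"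

end

theory Submission
  imports Defs
begin

(* Write q(y) = (y - theta0) p(y) for the prior density p and noise density l.  The posterior
   mean is theta0 + (q * l) / (p * l), a ratio of convolutions.  Both densities are even about
   their centres, so (q * l)(theta0) = 0 and the slope at theta0 is (q' * l)(theta0) / (p * l)(theta0);
   for a Gaussian prior this is E[(1 - V^2 / sigma0^2) l(V)] / E[l(V)] with V ~ N(0, sigma0^2).
   For Cauchy noise of scale s, v^2 l(v) = s / pi - s^2 l(v), so only E[l(V)] is needed, and after
   the substitution v = s u it is a multiple of G(b) = int exp(-b^2 u^2) / (1 + u^2) du with
   b = s / (sigma0 sqrt 2).  Finally G(b) = pi erfcx(b): the function
   exp(-b^2) G(b) + 2 sqrt pi int_0^b exp(-t^2) dt has derivative zero, since G' = 2 b G - 2 sqrt pi,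
   and tends to pi at infinity. *)

lemma integrable_bounded_mult:
  fixes h l :: "'a \<Rightarrow> real"
  assumes l: "integrable M l" and h: "h \<in> borel_measurable M" and bounded: "bounded (range h)"
  shows "integrable M (\<lambda>x. h x * l x)"
proof -
  obtain K where K: "\<And>x. \<bar>h x\<bar> \<le> K"
    using bounded by (auto simp: bounded_iff)
  show ?thesis
  proof (rule Bochner_Integration.integrable_bound[where f="\<lambda>x. K * \<bar>l x\<bar>"])
    show "integrable M (\<lambda>x. K * \<bar>l x\<bar>)"
      using l by auto
    show "(\<lambda>x. h x * l x) \<in> borel_measurable M"
      using h l by measurable
    show "AE x in M. norm (h x * l x) \<le> norm (K * \<bar>l x\<bar>)"
    proof (rule AE_I2)
      fix x
      have "\<bar>h x\<bar> \<le> \<bar>K\<bar>"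
        using K[of x] by linarith
      then show "norm (h x * l x) \<le> norm (K * \<bar>l x\<bar>)"
        by (simp add: abs_mult mult_right_mono)
    qed
  qed
qed

lemma borel_measurable_if_has_real_derivative:
  fixes f f' :: "real \<Rightarrow> real"
  assumes "\<And>y. (f has_real_derivative f' y) (at y)"
  shows "f \<in> borel_measurable borel"
  using assms
  by (intro borel_measurable_continuous_onI continuous_at_imp_continuous_on) (blast intro: DERIV_isCont)

lemma has_real_derivative_integral_lborel:
  fixes F F' :: "real \<Rightarrow> real \<Rightarrow> real" and w :: "real \<Rightarrow> real"
  assumes S: "open S" "convex S" "x \<in> S"
    and F_integrable: "\<And>y. y \<in> S \<Longrightarrow> integrable lborel (F y)"
    and F'_meas: "F' x \<in> borel_measurable lborel"
    and w: "integrable lborel w"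
    and F_deriv: "\<And>y t. y \<in> S \<Longrightarrow> ((\<lambda>y. F y t) has_real_derivative F' y t) (at y)"
    and F'_bound: "\<And>y t. y \<in> S \<Longrightarrow> \<bar>F' y t\<bar> \<le> w t"
  shows "((\<lambda>y. \<integral>t. F y t \<partial>lborel) has_real_derivative (\<integral>t. F' x t \<partial>lborel)) (at x)"
proof -
  have "((\<lambda>y. \<integral>t. F y t \<partial>lborel) has_real_derivative (\<integral>t. F' x t \<partial>lborel)) (at x within S)"
    unfolding has_field_derivative_iff tendsto_at_iff_sequentially comp_def
  proof (intro allI impI)
    fix X :: "nat \<Rightarrow> real"
    assume X: "\<forall>i. X i \<in> S - {x}" and lim: "X \<longlonglongrightarrow> x"
    define s where "s i t = (F (X i) t - F x t) / (X i - x)" for i t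
    have "(\<lambda>i. \<integral>t. s i t \<partial>lborel) \<longlonglongrightarrow> (\<integral>t. F' x t \<partial>lborel)"
    proof (rule integral_dominated_convergence[where w=w])
      show "s i \<in> borel_measurable lborel" for i
        unfolding s_def using F_integrable X S
        by (intro borel_measurable_divide borel_measurable_diff) auto
      show "AE t in lborel. (\<lambda>i. s i t) \<longlonglongrightarrow> F' x t"
      proof (rule AE_I2)
        fix t
        have "((\<lambda>y. (F y t - F x t) / (y - x)) \<longlongrightarrow> F' x t) (at x within S)"
          using has_field_derivative_at_within[OF F_deriv[OF S(3)]]
          unfolding has_field_derivative_iff .
        then show "(\<lambda>i. s i t) \<longlonglongrightarrow> F' x t"
          unfolding tendsto_at_iff_sequentially s_def comp_def using X lim by auto
      qed
      show "AE t in lborel. norm (s i t) \<le> w t" for i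
      proof (rule AE_I2)
        fix t
        have "norm (F (X i) t - F x t) \<le> w t * norm (X i - x)"
          using X S F'_bound
          by (intro field_differentiable_bound[where S=S and f'="\<lambda>y. F' y t"])
             (auto intro: has_field_derivative_at_within F_deriv)
        then show "norm (s i t) \<le> w t"
          using X unfolding s_def by (simp add: divide_le_eq)
      qed
    qed (use F'_meas w in auto)
    moreover have "(\<integral>t. s i t \<partial>lborel) = ((\<integral>t. F (X i) t \<partial>lborel) - (\<integral>t. F x t \<partial>lborel)) / (X i - x)" for i
      unfolding s_def using F_integrable X S by simp
    ultimately show "(\<lambda>i. ((\<integral>t. F (X i) t \<partial>lborel) - (\<integral>t. F x t \<partial>lborel)) / (X i - x))
        \<longlonglongrightarrow> (\<integral>t. F' x t \<partial>lborel)"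
      by simp
  qed
  then show ?thesis
    using at_within_open[OF S(3) S(1)] by simp
qed

lemma has_real_derivative_convolution:
  fixes h h' l :: "real \<Rightarrow> real"
  assumes h_deriv: "\<And>y. (h has_real_derivative h' y) (at y)"
    and h'_meas: "h' \<in> borel_measurable borel"
    and h'_bounded: "bounded (range h')" and h_bounded: "bounded (range h)"
    and l: "integrable lborel l"
  shows "((\<lambda>x. \<integral>v. h (x - v) * l v \<partial>lborel) has_real_derivative (\<integral>v. h' (x - v) * l v \<partial>lborel)) (at x)"
proof -
  note [measurable] = borel_measurable_if_has_real_derivative[OF h_deriv] h'_meas
    borel_measurable_integrable[OF l]
  obtain K' where K': "\<And>y. \<bar>h' y\<bar> \<le> K'"
    using h'_bounded by (auto simp: bounded_iff)
  show ?thesis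
  proof (rule has_real_derivative_integral_lborel[where S=UNIV and w="\<lambda>v. K' * \<bar>l v\<bar>"])
    show "integrable lborel (\<lambda>v. h (y - v) * l v)" for y
      using h_bounded by (intro integrable_bounded_mult[OF l]) (auto elim: bounded_subset)
    show "((\<lambda>y. h (y - v) * l v) has_real_derivative h' (y - v) * l v) (at y)" for y v
      by (auto intro!: derivative_eq_intros DERIV_chain2[OF h_deriv])
    show "\<bar>h' (y - v) * l v\<bar> \<le> K' * \<bar>l v\<bar>" for y v
      using K' by (simp add: abs_mult mult_right_mono)
  qed (use l in auto)
qed

lemma lborel_integral_odd_eq_0:
  fixes f :: "real \<Rightarrow> real"
  assumes f_odd: "\<And>x. f (- x) = - f x"
  shows "(\<integral>x. f x \<partial>lborel) = 0"
proof -
  have "(\<integral>x. f x \<partial>lborel) = (\<integral>x. f (- x) \<partial>lborel)"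
    using lborel_integral_real_affine[of "-1" f 0] by simp
  also have "\<dots> = - (\<integral>x. f x \<partial>lborel)"
    by (simp add: f_odd)
  finally show ?thesis
    by simp
qed

lemma lborel_integral_pos:
  fixes f :: "real \<Rightarrow> real"
  assumes f: "integrable lborel f" and pos: "\<And>x. f x > 0"
  shows "(\<integral>x. f x \<partial>lborel) > 0"
proof -
  have "(\<integral>x. f x \<partial>lborel) \<noteq> 0"
  proof
    assume "(\<integral>x. f x \<partial>lborel) = 0"
    then have "AE x in lborel. f x = 0"
      using integral_nonneg_eq_0_iff_AE[OF f] pos by (auto intro: less_imp_le)
    then have "AE x::real in lborel. False"
      by eventually_elim (metis pos less_irrefl)
    then show False
      by (simp add: eventually_False ae_filter_eq_bot_iff)
  qed
  moreover have "(\<integral>x. f x \<partial>lborel) \<ge> 0"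
    using pos by (intro integral_nonneg_AE) (auto intro: less_imp_le)
  ultimately show ?thesis
    by simp
qed

lemma posterior_mean_eq_shifted_ratio:
  fixes f l :: "real \<Rightarrow> real"
  assumes "integrable lborel (\<lambda>v. f (x - v) * l v)"
    and "integrable lborel (\<lambda>v. (x - v - m) * f (x - v) * l v)"
  shows "posterior_mean f l x
    = (m * (\<integral>v. f (x - v) * l v \<partial>lborel) + (\<integral>v. (x - v - m) * f (x - v) * l v \<partial>lborel))
        / (\<integral>v. f (x - v) * l v \<partial>lborel)"
proof -
  have reflect: "(\<integral>\<theta>. g \<theta> \<partial>lborel) = (\<integral>v. g (x - v) \<partial>lborel)" for g :: "real \<Rightarrow> real"
    using lborel_integral_real_affine[of "-1" g x] by simp
  have "(\<integral>v. (x - v) * f (x - v) * l v \<partial>lborel)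
      = (\<integral>v. m * (f (x - v) * l v) + (x - v - m) * f (x - v) * l v \<partial>lborel)"
    by (intro Bochner_Integration.integral_cong) (simp_all add: algebra_simps)
  also have "\<dots> = m * (\<integral>v. f (x - v) * l v \<partial>lborel) + (\<integral>v. (x - v - m) * f (x - v) * l v \<partial>lborel)"
    using assms by simp
  finally show ?thesis
    unfolding posterior_mean_def reflect[of "\<lambda>\<theta>. \<theta> * f \<theta> * l (x - \<theta>)"] reflect[of "\<lambda>\<theta>. f \<theta> * l (x - \<theta>)"]
    by simp
qed

lemma posterior_mean_has_real_derivative_at_center:
  fixes p p' l :: "real \<Rightarrow> real" and m :: real
  assumes p_deriv: "\<And>y. (p has_real_derivative p' y) (at y)"
    and p'_meas: "p' \<in> borel_measurable borel"
    and bounded: "bounded (range p)" "bounded (range p')"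
      "bounded (range (\<lambda>y. (y - m) * p y))" "bounded (range (\<lambda>y. (y - m) * p' y))"
    and p_pos: "\<And>y. p y > 0" and p_sym: "\<And>v. p (m + v) = p (m - v)"
    and l: "integrable lborel l" and l_pos: "\<And>v. l v > 0" and l_sym: "\<And>v. l (- v) = l v"
  shows "(posterior_mean p l has_real_derivative
           (\<integral>v. (p (m - v) - v * p' (m - v)) * l v \<partial>lborel) / (\<integral>v. p (m - v) * l v \<partial>lborel)) (at m)"
proof -
  define q where "q y = (y - m) * p y" for y
  define D where "D x = (\<integral>v. p (x - v) * l v \<partial>lborel)" for x
  define R where "R x = (\<integral>v. q (x - v) * l v \<partial>lborel)" for x
  define D' where "D' = (\<integral>v. p' (m - v) * l v \<partial>lborel)"
  define R' where "R' = (\<integral>v. (p (m - v) - v * p' (m - v)) * l v \<partial>lborel)"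
  note [measurable] = borel_measurable_if_has_real_derivative[OF p_deriv] p'_meas
    borel_measurable_integrable[OF l]
  have q_deriv: "(q has_real_derivative p y + (y - m) * p' y) (at y)" for y
    unfolding q_def[abs_def] by (auto intro!: derivative_eq_intros p_deriv)
  have "(D has_real_derivative D') (at m)"
    unfolding D_def[abs_def] D'_def
    by (rule has_real_derivative_convolution[OF p_deriv p'_meas bounded(2,1) l])
  moreover have "(R has_real_derivative R') (at m)"
  proof -
    have "((\<lambda>x. \<integral>v. q (x - v) * l v \<partial>lborel) has_real_derivative
        (\<integral>v. (p (m - v) + (m - v - m) * p' (m - v)) * l v \<partial>lborel)) (at m)"
    proof (rule has_real_derivative_convolution[OF q_deriv _ bounded_plus_comp[OF bounded(1,4)] _ l])
      show "(\<lambda>y. p y + (y - m) * p' y) \<in> borel_measurable borel"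
        by measurable
      show "bounded (range q)"
        using bounded(3) by (simp add: q_def[abs_def])
    qed
    then show ?thesis
      unfolding R_def[abs_def] R'_def by simp
  qed
  moreover have "D m > 0"
    unfolding D_def using p_pos l_pos bounded(1)
    by (intro lborel_integral_pos integrable_bounded_mult[OF l]) (auto elim: bounded_subset)
  moreover have "R m = 0"
    unfolding R_def q_def by (rule lborel_integral_odd_eq_0) (simp add: p_sym l_sym)
  moreover have "posterior_mean p l = (\<lambda>x. (m * D x + R x) / D x)"
  proof
    fix x
    show "posterior_mean p l x = (m * D x + R x) / D x"
      unfolding D_def R_def q_def using bounded(1,3)
      by (intro posterior_mean_eq_shifted_ratio integrable_bounded_mult[OF l]) (auto elim: bounded_subset)
  qed
  ultimately have "(posterior_mean p l has_real_derivative
      ((m * D' + R') * D m - (m * D m + R m) * D') / (D m * D m)) (at m)"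
    by (auto intro!: derivative_eq_intros)
  then show ?thesis
    using \<open>D m > 0\<close> \<open>R m = 0\<close> unfolding D_def[symmetric] R'_def[symmetric]
    by (simp add: field_simps)
qed

lemma normal_density_has_real_derivative:
  assumes "\<sigma> > 0"
  shows "(normal_density m \<sigma> has_real_derivative - ((y - m) / \<sigma>\<^sup>2) * normal_density m \<sigma> y) (at y)"
proof -
  have "((\<lambda>y. - (y - m)\<^sup>2 / (2 * \<sigma>\<^sup>2)) has_real_derivative - ((y - m) / \<sigma>\<^sup>2)) (at y)"
    using assms by (auto intro!: derivative_eq_intros simp: field_simps)
  from DERIV_cmult[OF DERIV_fun_exp[OF this], of "1 / sqrt (2 * pi * \<sigma>\<^sup>2)"] show ?thesis
    unfolding normal_density_def[abs_def] by (simp add: ac_simps)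
qed

lemma square_mult_exp_neg_square_le:
  fixes t \<sigma> :: real
  assumes "\<sigma> \<noteq> 0"
  shows "t\<^sup>2 * exp (- t\<^sup>2 / (2 * \<sigma>\<^sup>2)) \<le> 2 * \<sigma>\<^sup>2"
proof -
  define u where "u = t\<^sup>2 / (2 * \<sigma>\<^sup>2)"
  have "u \<le> exp u"
    using exp_ge_add_one_self[of u] by linarith
  then have "u * exp (- u) \<le> 1"
    by (simp add: exp_minus field_simps)
  moreover have "t\<^sup>2 * exp (- t\<^sup>2 / (2 * \<sigma>\<^sup>2)) = 2 * \<sigma>\<^sup>2 * (u * exp (- u))"
    unfolding u_def using assms by (simp add: field_simps)
  ultimately show ?thesis
    by (simp add: mult_left_le)
qed

lemma bounded_range_normal_density_moment:
  assumes \<sigma>: "\<sigma> > 0" and k: "k \<le> 2"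
  shows "bounded (range (\<lambda>y. (y - m) ^ k * normal_density m \<sigma> y))"
proof (rule boundedI, clarify)
  fix y
  define t where "t = y - m"
  define c where "c = 1 / sqrt (2 * pi * \<sigma>\<^sup>2)"
  define e where "e = exp (- t\<^sup>2 / (2 * \<sigma>\<^sup>2))"
  have density: "normal_density m \<sigma> y = c * e"
    unfolding normal_density_def c_def e_def t_def ..
  have power_le: "\<bar>t\<bar> ^ k \<le> 1 + t\<^sup>2"
  proof -
    have abs_le: "\<bar>t\<bar> \<le> 1 + t\<^sup>2"
      using zero_le_power2[of "\<bar>t\<bar> - 1"] by (simp add: power2_diff power2_abs)
    consider "k = 0" | "k = 1" | "k = 2"
      using k by linarith
    then show ?thesis
      by cases (use abs_le in \<open>simp_all add: power2_abs\<close>)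
  qed
  have "t\<^sup>2 * e \<le> 2 * \<sigma>\<^sup>2"
    unfolding e_def using \<sigma> by (intro square_mult_exp_neg_square_le) simp
  moreover have "e \<le> 1" "c \<ge> 0"
    unfolding e_def c_def by auto
  ultimately have "c * (e + t\<^sup>2 * e) \<le> c * (1 + 2 * \<sigma>\<^sup>2)"
    by (intro mult_left_mono) auto
  then have "(1 + t\<^sup>2) * (c * e) \<le> c * (1 + 2 * \<sigma>\<^sup>2)"
    by (simp add: algebra_simps)
  moreover have "norm ((y - m) ^ k * normal_density m \<sigma> y) = \<bar>t\<bar> ^ k * (c * e)"
    using \<open>c \<ge> 0\<close> unfolding density t_def e_def by (simp add: abs_mult power_abs)
  moreover have "\<bar>t\<bar> ^ k * (c * e) \<le> (1 + t\<^sup>2) * (c * e)"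
    using power_le \<open>c \<ge> 0\<close> unfolding e_def by (intro mult_right_mono) auto
  ultimately show "norm ((y - m) ^ k * normal_density m \<sigma> y) \<le> c * (1 + 2 * \<sigma>\<^sup>2)"
    by linarith
qed

lemma posterior_mean_normal_has_real_derivative:
  fixes l :: "real \<Rightarrow> real"
  assumes \<sigma>: "\<sigma> > 0"
    and l: "integrable lborel l" "\<And>v. l v > 0" "\<And>v. l (- v) = l v"
  shows "(posterior_mean (normal_density m \<sigma>) l has_real_derivative
           (\<integral>v. (1 - v\<^sup>2 / \<sigma>\<^sup>2) * normal_density 0 \<sigma> v * l v \<partial>lborel)
             / (\<integral>v. normal_density 0 \<sigma> v * l v \<partial>lborel)) (at m)"
proof -
  define p' where "p' y = - ((y - m) / \<sigma>\<^sup>2) * normal_density m \<sigma> y" for y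
  have moment: "bounded (range (\<lambda>y. (y - m) ^ k * normal_density m \<sigma> y))" if "k \<le> 2" for k
    using bounded_range_normal_density_moment[OF \<sigma> that] .
  have "(posterior_mean (normal_density m \<sigma>) l has_real_derivative
      (\<integral>v. (normal_density m \<sigma> (m - v) - v * p' (m - v)) * l v \<partial>lborel)
        / (\<integral>v. normal_density m \<sigma> (m - v) * l v \<partial>lborel)) (at m)"
  proof (rule posterior_mean_has_real_derivative_at_center[OF _ _ _ _ _ _ _ _ l])
    show "(normal_density m \<sigma> has_real_derivative p' y) (at y)" for y
      unfolding p'_def by (rule normal_density_has_real_derivative[OF \<sigma>])
    show "p' \<in> borel_measurable borel"
      unfolding p'_def[abs_def] by measurable
    show "bounded (range (normal_density m \<sigma>))"
      using moment[of 0] by simp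
    show "bounded (range (\<lambda>y. (y - m) * normal_density m \<sigma> y))"
      using moment[of 1] by simp
    show "bounded (range p')"
      using bounded_scaleR_comp[OF moment[of 1], of "- 1 / \<sigma>\<^sup>2"] by (simp add: p'_def[abs_def])
    show "bounded (range (\<lambda>y. (y - m) * p' y))"
      using bounded_scaleR_comp[OF moment[of 2], of "- 1 / \<sigma>\<^sup>2"]
      by (simp add: p'_def[abs_def] power2_eq_square mult.assoc)
    show "normal_density m \<sigma> y > 0" for y
      using \<sigma> by (rule normal_density_pos)
    show "normal_density m \<sigma> (m + v) = normal_density m \<sigma> (m - v)" for v
      by (simp add: normal_density_def)
  qed
  moreover have "normal_density m \<sigma> (m - v) = normal_density 0 \<sigma> v" for v
    by (simp add: normal_density_def power2_commute)
  moreover have "(normal_density 0 \<sigma> v - v * p' (m - v)) * l v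
      = (1 - v\<^sup>2 / \<sigma>\<^sup>2) * normal_density 0 \<sigma> v * l v" for v
    unfolding p'_def \<open>normal_density m \<sigma> (m - v) = normal_density 0 \<sigma> v\<close>
    by (simp add: algebra_simps power2_eq_square)
  ultimately show ?thesis
    by simp
qed

lemma exp_neg_square_scaled_eq_normal_density:
  fixes b u :: real
  assumes b: "b > 0"
  shows "exp (- (b\<^sup>2 * u\<^sup>2)) = sqrt pi / b * normal_density 0 (1 / (b * sqrt 2)) u"
proof -
  have "sqrt (2 * pi * (1 / (b * sqrt 2))\<^sup>2) = sqrt pi / b"
    using b by (simp add: power_divide real_sqrt_divide real_sqrt_mult power_mult_distrib)
  moreover have "- (u - 0)\<^sup>2 / (2 * (1 / (b * sqrt 2))\<^sup>2) = - (b\<^sup>2 * u\<^sup>2)"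
    using b by (simp add: power_mult_distrib power_one_over)
  ultimately show ?thesis
    unfolding normal_density_def using b by simp
qed

lemma integrable_exp_neg_square_scaled:
  "b > 0 \<Longrightarrow> integrable lborel (\<lambda>u. exp (- (b\<^sup>2 * u\<^sup>2)) :: real)"
  by (subst exp_neg_square_scaled_eq_normal_density) auto

lemma integral_exp_neg_square_scaled:
  "b > 0 \<Longrightarrow> (\<integral>u. exp (- (b\<^sup>2 * u\<^sup>2)) \<partial>lborel) = sqrt pi / b"
  by (subst exp_neg_square_scaled_eq_normal_density) auto

definition gauss_lorentz :: "real \<Rightarrow> real" where
  "gauss_lorentz b = (\<integral>u. exp (- (b\<^sup>2 * u\<^sup>2)) / (1 + u\<^sup>2) \<partial>lborel)"

lemma integrable_gauss_lorentz:
  fixes b :: real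
  assumes b: "b > 0"
  shows "integrable lborel (\<lambda>u. exp (- (b\<^sup>2 * u\<^sup>2)) / (1 + u\<^sup>2))"
proof (rule Bochner_Integration.integrable_bound[OF integrable_exp_neg_square_scaled[OF b]])
  show "AE u in lborel. norm (exp (- (b\<^sup>2 * u\<^sup>2)) / (1 + u\<^sup>2)) \<le> norm (exp (- (b\<^sup>2 * u\<^sup>2)))"
    by (rule AE_I2) (simp add: divide_le_eq add_pos_nonneg)
qed simp

lemma gauss_lorentz_nonneg: "0 \<le> gauss_lorentz b"
  unfolding gauss_lorentz_def by (rule integral_nonneg_AE) (simp add: add_pos_nonneg)

lemma gauss_lorentz_le:
  assumes b: "b > 0"
  shows "gauss_lorentz b \<le> sqrt pi / b"
proof -
  have "gauss_lorentz b \<le> (\<integral>u. exp (- (b\<^sup>2 * u\<^sup>2)) \<partial>lborel)"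
    unfolding gauss_lorentz_def
    using integrable_gauss_lorentz[OF b] integrable_exp_neg_square_scaled[OF b]
    by (rule integral_mono) (simp add: divide_le_eq add_pos_nonneg)
  then show ?thesis
    using integral_exp_neg_square_scaled[OF b] by simp
qed

lemma gauss_lorentz_integrand_deriv_le:
  fixes b x u :: real
  assumes b: "b > 0" and x: "b/2 < x" "x < 2*b"
  shows "2 * x * u\<^sup>2 * exp (- (x\<^sup>2 * u\<^sup>2)) / (1 + u\<^sup>2) \<le> 4 * b * exp (- ((b/2)\<^sup>2 * u\<^sup>2))"
proof -
  have "(b/2)\<^sup>2 * u\<^sup>2 \<le> x\<^sup>2 * u\<^sup>2"
    using x b by (intro mult_right_mono power_mono) auto
  then have "exp (- (x\<^sup>2 * u\<^sup>2)) \<le> exp (- ((b/2)\<^sup>2 * u\<^sup>2))"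
    by simp
  moreover have "u\<^sup>2 / (1 + u\<^sup>2) \<le> 1"
    by (simp add: divide_le_eq add_pos_nonneg)
  ultimately have "2 * x * (u\<^sup>2 / (1 + u\<^sup>2)) * exp (- (x\<^sup>2 * u\<^sup>2))
      \<le> 2 * (2 * b) * 1 * exp (- ((b/2)\<^sup>2 * u\<^sup>2))"
    using x b by (intro mult_mono) auto
  then show ?thesis
    by simp
qed

lemma gauss_lorentz_has_real_derivative:
  assumes b: "b > 0"
  shows "(gauss_lorentz has_real_derivative 2 * b * gauss_lorentz b - 2 * sqrt pi) (at b)"
proof -
  define F' where "F' x u = - (2 * x * u\<^sup>2 * exp (- (x\<^sup>2 * u\<^sup>2)) / (1 + u\<^sup>2))" for x u :: real
  have one_plus_square: "1 + u\<^sup>2 > 0" for u :: real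
    by (simp add: add_pos_nonneg)
  have "(gauss_lorentz has_real_derivative (\<integral>u. F' b u \<partial>lborel)) (at b)"
    unfolding gauss_lorentz_def[abs_def]
  proof (rule has_real_derivative_integral_lborel[where S="{b/2<..<2*b}"
        and w="\<lambda>u. 4 * b * exp (- ((b/2)\<^sup>2 * u\<^sup>2))"])
    show "integrable lborel (\<lambda>u. 4 * b * exp (- ((b/2)\<^sup>2 * u\<^sup>2)))"
      using integrable_exp_neg_square_scaled[of "b/2"] b by simp
    show "((\<lambda>x. exp (- (x\<^sup>2 * u\<^sup>2)) / (1 + u\<^sup>2)) has_real_derivative F' x u) (at x)" for x u
    proof -
      have "((\<lambda>x. - (x\<^sup>2 * u\<^sup>2)) has_real_derivative - (2 * x * u\<^sup>2)) (at x)"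
        by (auto intro!: derivative_eq_intros)
      from DERIV_cdivide[OF DERIV_fun_exp[OF this], of "1 + u\<^sup>2"] show ?thesis
        unfolding F'_def by (simp add: mult_ac)
    qed
    show "\<bar>F' x u\<bar> \<le> 4 * b * exp (- ((b/2)\<^sup>2 * u\<^sup>2))" if "x \<in> {b/2<..<2*b}" for x u
      using that b one_plus_square[of u] gauss_lorentz_integrand_deriv_le[of b x u]
      unfolding F'_def by (simp add: abs_mult abs_divide)
  qed (use b integrable_gauss_lorentz in \<open>auto simp: F'_def\<close>)
  moreover have "(\<integral>u. F' b u \<partial>lborel) = 2 * b * gauss_lorentz b - 2 * sqrt pi"
  proof -
    define g where "g u = exp (- (b\<^sup>2 * u\<^sup>2)) / (1 + u\<^sup>2)" for u :: real
    define e where "e u = exp (- (b\<^sup>2 * u\<^sup>2))" for u :: real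
    have "integrable lborel g" "integrable lborel e"
      unfolding g_def[abs_def] e_def[abs_def]
      using integrable_gauss_lorentz[OF b] integrable_exp_neg_square_scaled[OF b] .
    moreover have "F' b u = 2 * b * g u - 2 * b * e u" for u
      unfolding F'_def g_def e_def using one_plus_square[of u] by (simp add: field_simps)
    ultimately have "(\<integral>u. F' b u \<partial>lborel) = 2 * b * (\<integral>u. g u \<partial>lborel) - 2 * b * (\<integral>u. e u \<partial>lborel)"
      by simp
    also have "\<dots> = 2 * b * gauss_lorentz b - 2 * b * (sqrt pi / b)"
      unfolding g_def e_def gauss_lorentz_def integral_exp_neg_square_scaled[OF b] ..
    finally show ?thesis
      using b by simp
  qed
  ultimately show ?thesis
    by simp
qed

lemma has_real_derivative_interval_integral_upper:
  fixes f :: "real \<Rightarrow> real" and a y :: real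
  assumes f: "continuous_on UNIV f"
  shows "((\<lambda>y. LBINT t=a..y. f t) has_real_derivative f y) (at y)"
proof -
  define r where "r = \<bar>a\<bar> + \<bar>y\<bar> + 1"
  have "((\<lambda>u. LBINT t=a..u. f t) has_vector_derivative f y) (at y within {-r..r::real})"
    using f unfolding r_def by (intro interval_integral_FTC2) (auto intro: continuous_on_subset)
  moreover have "at y within {-r..r} = at y"
    unfolding r_def by (intro at_within_Icc_at) auto
  ultimately show ?thesis
    by (simp add: has_real_derivative_iff_has_vector_derivative)
qed

lemma tendsto_interval_integral_gauss_at_top:
  "((\<lambda>y::real. LBINT t=0..y. exp (- (t\<^sup>2))) \<longlongrightarrow> sqrt pi / 2) at_top"
proof -
  define f where "f t = indicator {0..} t *\<^sub>R exp (- (t\<^sup>2))" for t :: real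
  define s where "s y t = indicator {0..y} t *\<^sub>R exp (- (t\<^sup>2))" for y t :: real
  have f: "has_bochner_integral lborel f (sqrt pi / 2)"
    unfolding f_def using gaussian_moment_0 by simp
  have "((\<lambda>y. \<integral>t. s y t \<partial>lborel) \<longlongrightarrow> (\<integral>t. f t \<partial>lborel)) at_top"
  proof (rule integral_dominated_convergence_at_top[where w=f])
    show "AE t in lborel. ((\<lambda>y. s y t) \<longlongrightarrow> f t) at_top"
    proof (rule AE_I2, rule tendsto_eventually)
      show "\<forall>\<^sub>F y in at_top. s y t = f t" for t
        unfolding eventually_at_top_linorder
        by (rule exI[of _ t]) (auto simp: s_def f_def indicator_def)
    qed
    show "\<forall>\<^sub>F y in at_top. AE t in lborel. norm (s y t) \<le> f t"
      by (intro always_eventually allI AE_I2) (auto simp: s_def f_def indicator_def)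
  qed (use f integrable.intros[OF f] in \<open>auto simp: f_def s_def\<close>)
  moreover have "\<forall>\<^sub>F y in at_top. (\<integral>t. s y t \<partial>lborel) = (LBINT t=0..y. exp (- (t\<^sup>2)))"
    unfolding eventually_at_top_linorder s_def
    using interval_integral_Icc[of 0 _ "\<lambda>t. exp (- (t\<^sup>2))"]
    by (intro exI[of _ 0]) (simp add: zero_ereal_def set_lebesgue_integral_def)
  ultimately show ?thesis
    using has_bochner_integral_integral_eq[OF f] by (simp add: tendsto_cong)
qed

lemma tendsto_exp_neg_square_mult_gauss_lorentz:
  "((\<lambda>z. exp (- (z\<^sup>2)) * gauss_lorentz z) \<longlongrightarrow> 0) at_top"
proof (rule tendsto_sandwich[where f="\<lambda>_. 0" and h="\<lambda>z. sqrt pi / z"])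
  show "\<forall>\<^sub>F z in at_top. 0 \<le> exp (- (z\<^sup>2)) * gauss_lorentz z"
    by (simp add: gauss_lorentz_nonneg)
  have bound: "exp (- (z\<^sup>2)) * gauss_lorentz z \<le> sqrt pi / z" if "z > 0" for z
    using mult_right_mono[of "exp (- (z\<^sup>2))" 1 "gauss_lorentz z"] gauss_lorentz_le[OF that]
    by (simp add: gauss_lorentz_nonneg)
  show "\<forall>\<^sub>F z in at_top. exp (- (z\<^sup>2)) * gauss_lorentz z \<le> sqrt pi / z"
    using eventually_gt_at_top[of 0] by (rule eventually_mono) (rule bound)
  show "((\<lambda>z. sqrt pi / z) \<longlongrightarrow> 0) at_top"
    by (intro tendsto_divide_0[OF tendsto_const] filterlim_at_top_imp_at_infinity filterlim_ident)
qed simp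

lemma gauss_lorentz_eq_erfcx:
  assumes b: "b > 0"
  shows "gauss_lorentz b = pi * erfcx b"
proof -
  define P where "P z = exp (- (z\<^sup>2)) * gauss_lorentz z + 2 * sqrt pi * (LBINT t=0..z. exp (- (t\<^sup>2)))"
    for z :: real
  have P_deriv: "(P has_real_derivative 0) (at z)" if "z > 0" for z
  proof -
    have integral_deriv:
      "((\<lambda>z. LBINT t=0..z. exp (- (t\<^sup>2))) has_real_derivative exp (- (z\<^sup>2))) (at z)"
      using has_real_derivative_interval_integral_upper[of "\<lambda>t. exp (- (t\<^sup>2))" 0 z]
      by (simp add: continuous_intros zero_ereal_def)
    show ?thesis
      unfolding P_def[abs_def]
      by (rule derivative_eq_intros gauss_lorentz_has_real_derivative[OF that] integral_deriv refl)+
         (simp add: algebra_simps)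
  qed
  have P_const: "P z = P b" if "z > b" for z
  proof (rule DERIV_isconst_end[where f=P])
    show "continuous_on {b..z} P"
    proof (intro continuous_at_imp_continuous_on ballI)
      fix x :: real
      assume "x \<in> {b..z}"
      then have "x > 0"
        using b by auto
      then show "isCont P x"
        by (rule DERIV_isCont[OF P_deriv])
    qed
  qed (use that b P_deriv in auto)
  have "(P \<longlongrightarrow> 0 + 2 * sqrt pi * (sqrt pi / 2)) at_top"
    unfolding P_def[abs_def]
    by (intro tendsto_intros tendsto_exp_neg_square_mult_gauss_lorentz tendsto_interval_integral_gauss_at_top)
  then have "(P \<longlongrightarrow> pi) at_top"
    by simp
  moreover have "\<forall>\<^sub>F z in at_top. P z = P b"
    using eventually_gt_at_top[of b] by (rule eventually_mono) (rule P_const)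
  ultimately have "((\<lambda>z::real. P b) \<longlongrightarrow> pi) at_top"
    by (rule Lim_transform_eventually)
  then have "P b = pi"
    by (simp add: tendsto_const_iff)
  then have "gauss_lorentz b = exp (b\<^sup>2) * (pi - 2 * sqrt pi * (LBINT t=0..b. exp (- (t\<^sup>2))))"
    unfolding P_def by (simp add: exp_minus field_simps)
  also have "\<dots> = pi * erfcx b"
    unfolding erfcx_def by (simp add: field_simps)
  finally show ?thesis .
qed

lemma borel_measurable_cauchy_density [measurable]: "cauchy_density \<mu> s \<in> borel_measurable borel"
  unfolding cauchy_density_def[abs_def] by measurable

lemma cauchy_density_pos: "s > 0 \<Longrightarrow> cauchy_density \<mu> s v > 0"
  unfolding cauchy_density_def by (simp add: add_pos_nonneg)

lemma cauchy_density_le: "s > 0 \<Longrightarrow> cauchy_density \<mu> s v \<le> 1 / (pi * s)"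
  unfolding cauchy_density_def by (simp add: frac_le)

lemma integrable_cauchy_density:
  assumes s: "s > 0"
  shows "integrable lborel (cauchy_density \<mu> s)"
proof -
  have "integrable lborel (\<lambda>x. inverse (1 + x\<^sup>2) :: real)"
    using integrable_inverse_1_plus_square by (simp add: set_integrable_def einterval_eq_UNIV)
  from lborel_integrable_real_affine[OF this, of "1 / s" "- \<mu> / s"] s
  have "integrable lborel (\<lambda>x. 1 / (pi * s) * inverse (1 + (- \<mu> / s + 1 / s * x)\<^sup>2))"
    by simp
  moreover have "cauchy_density \<mu> s = (\<lambda>x. 1 / (pi * s) * inverse (1 + (- \<mu> / s + 1 / s * x)\<^sup>2))"
    unfolding cauchy_density_def using s by (simp add: inverse_eq_divide diff_divide_distrib)
  ultimately show ?thesis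
    by simp
qed

lemma cauchy_density_centered:
  assumes "s > 0"
  shows "cauchy_density 0 s v = s / (pi * (s\<^sup>2 + v\<^sup>2))"
proof -
  have "1 + ((v - 0) / s)\<^sup>2 = (s\<^sup>2 + v\<^sup>2) / s\<^sup>2"
    using assms by (simp add: field_simps)
  then show ?thesis
    unfolding cauchy_density_def using assms by (simp add: power2_eq_square)
qed

lemma square_mult_cauchy_density:
  assumes s: "s > 0"
  shows "v\<^sup>2 * cauchy_density 0 s v = s / pi - s\<^sup>2 * cauchy_density 0 s v"
proof -
  have "pi * (s\<^sup>2 + v\<^sup>2) \<noteq> 0"
    using s by (simp add: add_pos_nonneg)
  then show ?thesis
    unfolding cauchy_density_centered[OF s] by (simp add: field_simps)
qed

lemma integral_normal_density_mult_cauchy_density: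
  assumes \<sigma>: "\<sigma> > 0" and s: "s > 0"
  shows "(\<integral>v. normal_density 0 \<sigma> v * cauchy_density 0 s v \<partial>lborel)
    = erfcx (s / \<sigma> / sqrt 2) / (\<sigma> * sqrt (2 * pi))"
proof -
  define b where "b = s / \<sigma> / sqrt 2"
  define c where "c = 1 / (\<sigma> * sqrt (2 * pi) * (pi * s))"
  have b: "b > 0"
    unfolding b_def using \<sigma> s by simp
  have exponent: "- (s * u - 0)\<^sup>2 / (2 * \<sigma>\<^sup>2) = - (b\<^sup>2 * u\<^sup>2)" for u
    unfolding b_def using \<sigma> by (simp add: power_mult_distrib power_divide)
  have normalizer: "sqrt (2 * pi * \<sigma>\<^sup>2) = \<sigma> * sqrt (2 * pi)"
    using \<sigma> by (simp add: real_sqrt_mult)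
  have "cauchy_density 0 s (s * u) = 1 / (pi * s * (1 + u\<^sup>2))" for u
    unfolding cauchy_density_def using s by (simp add: power_mult_distrib)
  then have scaled: "normal_density 0 \<sigma> (s * u) * cauchy_density 0 s (s * u)
      = c * (exp (- (b\<^sup>2 * u\<^sup>2)) / (1 + u\<^sup>2))" for u
    unfolding normal_density_def exponent normalizer c_def by simp
  have "(\<integral>v. normal_density 0 \<sigma> v * cauchy_density 0 s v \<partial>lborel)
      = s * (\<integral>u. c * (exp (- (b\<^sup>2 * u\<^sup>2)) / (1 + u\<^sup>2)) \<partial>lborel)"
    using lborel_integral_real_affine[of s "\<lambda>v. normal_density 0 \<sigma> v * cauchy_density 0 s v" 0] s
    by (simp add: scaled)
  also have "\<dots> = s * c * (pi * erfcx b)"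
    unfolding gauss_lorentz_eq_erfcx[OF b, symmetric] gauss_lorentz_def
    by (simp only: integral_mult_right_zero mult.assoc)
  also have "\<dots> = erfcx b / (\<sigma> * sqrt (2 * pi))"
    unfolding c_def using s by simp
  finally show ?thesis
    unfolding b_def .
qed

lemma integrable_normal_density_mult_cauchy_density:
  assumes "\<sigma> > 0" and s: "s > 0"
  shows "integrable lborel (\<lambda>v. normal_density m \<sigma> v * cauchy_density \<mu> s v)"
proof -
  have "integrable lborel (\<lambda>v. cauchy_density \<mu> s v * normal_density m \<sigma> v)"
    using assms cauchy_density_le[OF s] cauchy_density_pos[OF s]
    by (intro integrable_bounded_mult boundedI) (auto simp: less_imp_le)
  then show ?thesis
    by (simp add: mult.commute)
qed

lemma normal_cauchy_integral_ratio:
  assumes \<sigma>: "\<sigma> > 0" and s: "s > 0"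
  shows "(\<integral>v. (1 - v\<^sup>2 / \<sigma>\<^sup>2) * normal_density 0 \<sigma> v * cauchy_density 0 s v \<partial>lborel)
      / (\<integral>v. normal_density 0 \<sigma> v * cauchy_density 0 s v \<partial>lborel)
    = 1 + (s / \<sigma>)\<^sup>2 - sqrt (2 / pi) * (s / \<sigma>) / erfcx (s / \<sigma> / sqrt 2)"
proof -
  define I where "I = (\<integral>v. normal_density 0 \<sigma> v * cauchy_density 0 s v \<partial>lborel)"
  have integrable: "integrable lborel (\<lambda>v. normal_density 0 \<sigma> v * cauchy_density 0 s v)"
    using \<sigma> s by (rule integrable_normal_density_mult_cauchy_density)
  have "I > 0"
    unfolding I_def using integrable \<sigma> s
    by (intro lborel_integral_pos mult_pos_pos normal_density_pos cauchy_density_pos)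
  have "(1 - v\<^sup>2 / \<sigma>\<^sup>2) * normal_density 0 \<sigma> v * cauchy_density 0 s v
      = (1 + s\<^sup>2 / \<sigma>\<^sup>2) * (normal_density 0 \<sigma> v * cauchy_density 0 s v)
        - s / (pi * \<sigma>\<^sup>2) * normal_density 0 \<sigma> v" for v
  proof -
    have "(1 - v\<^sup>2 / \<sigma>\<^sup>2) * normal_density 0 \<sigma> v * cauchy_density 0 s v
        = normal_density 0 \<sigma> v * cauchy_density 0 s v
          - normal_density 0 \<sigma> v * (v\<^sup>2 * cauchy_density 0 s v) / \<sigma>\<^sup>2"
      using \<sigma> by (simp add: field_simps)
    also have "\<dots> = (1 + s\<^sup>2 / \<sigma>\<^sup>2) * (normal_density 0 \<sigma> v * cauchy_density 0 s v)
        - s / (pi * \<sigma>\<^sup>2) * normal_density 0 \<sigma> v"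
      unfolding square_mult_cauchy_density[OF s] using \<sigma> by (simp add: field_simps)
    finally show ?thesis .
  qed
  then have numerator: "(\<integral>v. (1 - v\<^sup>2 / \<sigma>\<^sup>2) * normal_density 0 \<sigma> v * cauchy_density 0 s v \<partial>lborel)
      = (1 + s\<^sup>2 / \<sigma>\<^sup>2) * I - s / (pi * \<sigma>\<^sup>2)"
    unfolding I_def using integrable \<sigma> by simp
  have erfcx: "erfcx (s / \<sigma> / sqrt 2) = I * (\<sigma> * sqrt (2 * pi))"
    unfolding I_def integral_normal_density_mult_cauchy_density[OF \<sigma> s] using \<sigma> by simp
  have "sqrt (2 / pi) = sqrt (2 * pi) / pi"
    by (simp add: real_sqrt_divide real_sqrt_mult field_simps)
  then show ?thesis
    unfolding numerator I_def[symmetric] erfcx using \<open>I > 0\<close> \<sigma> s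
    by (simp add: field_simps power2_eq_square)
qed

theorem mainTheorem6:
  fixes \<sigma>\<^sub>0 \<sigma>\<^sub>\<epsilon> \<theta>\<^sub>0 :: real
  assumes "\<sigma>\<^sub>0 > 0" and "\<sigma>\<^sub>\<epsilon> > 0"
  shows "(posterior_mean (normal_density \<theta>\<^sub>0 \<sigma>\<^sub>0) (cauchy_density 0 \<sigma>\<^sub>\<epsilon>)
            has_real_derivative
            (1 + (\<sigma>\<^sub>\<epsilon> / \<sigma>\<^sub>0)^2
               - sqrt (2 / pi) * (\<sigma>\<^sub>\<epsilon> / \<sigma>\<^sub>0) / erfcx ((\<sigma>\<^sub>\<epsilon> / \<sigma>\<^sub>0) / sqrt 2)))
         (at \<theta>\<^sub>0)"
proof -
  have "(posterior_mean (normal_density \<theta>\<^sub>0 \<sigma>\<^sub>0) (cauchy_density 0 \<sigma>\<^sub>\<epsilon>) has_real_derivative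
      (\<integral>v. (1 - v\<^sup>2 / \<sigma>\<^sub>0\<^sup>2) * normal_density 0 \<sigma>\<^sub>0 v * cauchy_density 0 \<sigma>\<^sub>\<epsilon> v \<partial>lborel)
        / (\<integral>v. normal_density 0 \<sigma>\<^sub>0 v * cauchy_density 0 \<sigma>\<^sub>\<epsilon> v \<partial>lborel)) (at \<theta>\<^sub>0)"
    using assms
    by (intro posterior_mean_normal_has_real_derivative integrable_cauchy_density cauchy_density_pos)
       (simp_all add: cauchy_density_def)
  then show ?thesis
    unfolding normal_cauchy_integral_ratio[OF assms] .
qed

end
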